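(* Let $\mathcal C$ be an $R$-coring satisfying the left $\alpha$-condition, and suppose $\mathcal C=\bigoplus_{i\in I}C_i$ as left $\mathcal C$-comodules. Then $\mathrm{Rat}^{\mathcal C}({}^*C_i)$ is dense in ${}^*C_i$ (finite topology) for every $i\in I$ if and only if $\mathrm{Rat}^{\mathcal C}({}^*\mathcal C)$ is dense in ${}^*\mathcal C$ (finite topology).
   Context: An $R$-coring is a triple $(\mathcal C,\Delta,\varepsilon)$ with $\mathcal C$ an $R$-bimodule and $\Delta:\mathcal C\to\mathcal C\otimes_R\mathcal C$, $\varepsilon:\mathcal C\to R$ coassociative and counital $R$-bimodule maps; write $\Delta(c)=c_{(1)}\otimes_R c_{(2)}$. ${}^*\mathcal C={}_R\mathrm{Hom}(\mathcal C,R)$ is a ring with product $(f\#g)(c)=g(c_{(1)}f(c_{(2)}))$. $\mathcal C$ satisfies the left $\alpha$-condition if it is locally projective as a left $R$-module. A left $\mathcal C$-comodule is a left $R$-module $M$ with a coassociative counital left $R$-linear map $M\to\mathcal C\otimes_R M$, $m\mapsto m_{[-1]}\otimes m_{[0]}$; $\mathcal C$ is a left comodule via $\Delta$. For a left comodule $M$, ${}^*M={}_R\mathrm{Hom}(M,R)$ is a right ${}^*\mathcal C$-module via $(h\cdot f)(m)=f(m_{[-1]}h(m_{[0]}))$ (for $M=\mathcal C$ this is right multiplication in ${}^*\mathcal C$). For a right ${}^*\mathcal C$-module $N$, $\mathrm{Rat}^{\mathcal C}(N)$ is the set of $n\in N$ for which there is $\sum_i n_i\otimes c_i\in N\otimes_R\mathcal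 C$ with $n\cdot f=\sum_i n_if(c_i)$ for all $f\in{}^*\mathcal C$ (the largest rational submodule). The finite topology on ${}_R\mathrm{Hom}(M,R)$ has basic open sets $\{g\mid g(x)=f(x)\ \forall x\in F\}$, $F\subseteq M$ finite. *)

theory Defs
  imports Main
begin

text \<open>
  The coring C is the whole type 'c (an abelian group) with a left R-action lact
  (lact r c = r c) and a right R-action ract (ract c r = c r).
  Elements of tensor products over R are represented by finite formal sums
  (lists of simple tensors); equality in the tensor product is the equality modulo
  the subgroup generated by the defining (bi)additivity and R-balancing relations.
\<close>

definition delta :: "'a \<Rightarrow> 'a \<Rightarrow> int" where
  "delta p = (\<lambda>q. if q = p then 1 else 0)"

definition fcount :: "'a list \<Rightarrow> 'a \<Rightarrow> int" where
  "fcount xs = (\<lambda>q. int (length (filter (\<lambda>p. p = q) xs)))"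

text \<open>Relations subgroup defining C_R \<otimes>_R {}_RC (inside the free abelian group on C \<times> C).\<close>
inductive_set tensor2_rel ::
  "('r::ring_1 \<Rightarrow> 'c::ab_group_add \<Rightarrow> 'c) \<Rightarrow> ('c \<Rightarrow> 'r \<Rightarrow> 'c) \<Rightarrow> ('c \<times> 'c \<Rightarrow> int) set"
  for lact ract where
  zero: "(\<lambda>_. 0) \<in> tensor2_rel lact ract"
| addl: "(\<lambda>q. delta (a + a', b) q - delta (a, b) q - delta (a', b) q) \<in> tensor2_rel lact ract"
| addr: "(\<lambda>q. delta (a, b + b') q - delta (a, b) q - delta (a, b') q) \<in> tensor2_rel lact ract"
| bal: "(\<lambda>q. delta (ract a r, b) q - delta (a, lact r b) q) \<in> tensor2_rel lact ract"
| plus: "x \<in> tensor2_rel lact ract \<Longrightarrow> y \<in> tensor2_rel lact ract \<Longrightarrow>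
         (\<lambda>q. x q + y q) \<in> tensor2_rel lact ract"
| neg: "x \<in> tensor2_rel lact ract \<Longrightarrow> (\<lambda>q. - x q) \<in> tensor2_rel lact ract"

definition teq2 :: "('r::ring_1 \<Rightarrow> 'c::ab_group_add \<Rightarrow> 'c) \<Rightarrow> ('c \<Rightarrow> 'r \<Rightarrow> 'c) \<Rightarrow>
    ('c \<times> 'c) list \<Rightarrow> ('c \<times> 'c) list \<Rightarrow> bool" where
  "teq2 lact ract xs ys \<longleftrightarrow> (\<lambda>q. fcount xs q - fcount ys q) \<in> tensor2_rel lact ract"

inductive_set tensor3_rel ::
  "('r::ring_1 \<Rightarrow> 'c::ab_group_add \<Rightarrow> 'c) \<Rightarrow> ('c \<Rightarrow> 'r \<Rightarrow> 'c) \<Rightarrow> ('c \<times> 'c \<times> 'c \<Rightarrow> int) set"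
  for lact ract where
  zero: "(\<lambda>_. 0) \<in> tensor3_rel lact ract"
| add1: "(\<lambda>q. delta (a + a', b, c) q - delta (a, b, c) q - delta (a', b, c) q) \<in> tensor3_rel lact ract"
| add2: "(\<lambda>q. delta (a, b + b', c) q - delta (a, b, c) q - delta (a, b', c) q) \<in> tensor3_rel lact ract"
| add3: "(\<lambda>q. delta (a, b, c + c') q - delta (a, b, c) q - delta (a, b, c') q) \<in> tensor3_rel lact ract"
| bal12: "(\<lambda>q. delta (ract a r, b, c) q - delta (a, lact r b, c) q) \<in> tensor3_rel lact ract"
| bal23: "(\<lambda>q. delta (a, ract b r, c) q - delta (a, b, lact r c) q) \<in> tensor3_rel lact ract"
| plus: "x \<in> tensor3_rel lact ract \<Longrightarrow> y \<in> tensor3_rel lact ract \<Longrightarrow>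
         (\<lambda>q. x q + y q) \<in> tensor3_rel lact ract"
| neg: "x \<in> tensor3_rel lact ract \<Longrightarrow> (\<lambda>q. - x q) \<in> tensor3_rel lact ract"

definition teq3 :: "('r::ring_1 \<Rightarrow> 'c::ab_group_add \<Rightarrow> 'c) \<Rightarrow> ('c \<Rightarrow> 'r \<Rightarrow> 'c) \<Rightarrow>
    ('c \<times> 'c \<times> 'c) list \<Rightarrow> ('c \<times> 'c \<times> 'c) list \<Rightarrow> bool" where
  "teq3 lact ract xs ys \<longleftrightarrow> (\<lambda>q. fcount xs q - fcount ys q) \<in> tensor3_rel lact ract"

definition bimodule :: "('r::ring_1 \<Rightarrow> 'c::ab_group_add \<Rightarrow> 'c) \<Rightarrow> ('c \<Rightarrow> 'r \<Rightarrow> 'c) \<Rightarrow> bool" where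
  "bimodule lact ract \<longleftrightarrow>
     (\<forall>r x y. lact r (x + y) = lact r x + lact r y) \<and>
     (\<forall>r s x. lact (r + s) x = lact r x + lact s x) \<and>
     (\<forall>r s x. lact (r * s) x = lact r (lact s x)) \<and>
     (\<forall>x. lact 1 x = x) \<and>
     (\<forall>r x y. ract (x + y) r = ract x r + ract y r) \<and>
     (\<forall>r s x. ract x (r + s) = ract x r + ract x s) \<and>
     (\<forall>r s x. ract x (r * s) = ract (ract x r) s) \<and>
     (\<forall>x. ract x 1 = x) \<and>
     (\<forall>r s x. ract (lact r x) s = lact r (ract x s))"

definition coring :: "('r::ring_1 \<Rightarrow> 'c::ab_group_add \<Rightarrow> 'c) \<Rightarrow> ('c \<Rightarrow> 'r \<Rightarrow> 'c) \<Rightarrow>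
    ('c \<Rightarrow> ('c \<times> 'c) list) \<Rightarrow> ('c \<Rightarrow> 'r) \<Rightarrow> bool" where
  "coring lact ract Delta eps \<longleftrightarrow>
     bimodule lact ract \<and>
     \<comment> \<open>Delta is an R-bimodule map\<close>
     (\<forall>x y. teq2 lact ract (Delta (x + y)) (Delta x @ Delta y)) \<and>
     (\<forall>r x. teq2 lact ract (Delta (lact r x)) (map (\<lambda>(a, b). (lact r a, b)) (Delta x))) \<and>
     (\<forall>r x. teq2 lact ract (Delta (ract x r)) (map (\<lambda>(a, b). (a, ract b r)) (Delta x))) \<and>
     \<comment> \<open>eps is an R-bimodule map\<close>
     (\<forall>x y. eps (x + y) = eps x + eps y) \<and>
     (\<forall>r x. eps (lact r x) = r * eps x) \<and>
     (\<forall>r x. eps (ract x r) = eps x * r) \<and>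
     \<comment> \<open>coassociativity\<close>
     (\<forall>c. teq3 lact ract
        (concat (map (\<lambda>(a, b). map (\<lambda>(x, y). (x, y, b)) (Delta a)) (Delta c)))
        (concat (map (\<lambda>(a, b). map (\<lambda>(x, y). (a, x, y)) (Delta b)) (Delta c)))) \<and>
     \<comment> \<open>counitality\<close>
     (\<forall>c. (\<Sum>(a, b)\<leftarrow>Delta c. lact (eps a) b) = c) \<and>
     (\<forall>c. (\<Sum>(a, b)\<leftarrow>Delta c. ract a (eps b)) = c)"

text \<open>Left R-linear maps M \<rightarrow> R (extended by 0 outside M): the left dual {}^*M.\<close>
definition ldual :: "('r::ring_1 \<Rightarrow> 'c::ab_group_add \<Rightarrow> 'c) \<Rightarrow> 'c set \<Rightarrow> ('c \<Rightarrow> 'r) set" where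
  "ldual lact M = {h. (\<forall>x\<in>M. \<forall>y\<in>M. h (x + y) = h x + h y) \<and>
                      (\<forall>r. \<forall>x\<in>M. h (lact r x) = r * h x) \<and>
                      (\<forall>x. x \<notin> M \<longrightarrow> h x = 0)}"

text \<open>Left alpha-condition: C is locally projective as a left R-module
  (finite dual basis formulation).\<close>
definition left_alpha :: "('r::ring_1 \<Rightarrow> 'c::ab_group_add \<Rightarrow> 'c) \<Rightarrow> bool" where
  "left_alpha lact \<longleftrightarrow>
     (\<forall>F. finite F \<longrightarrow> (\<exists>ps :: (('c \<Rightarrow> 'r) \<times> 'c) list.
        (\<forall>(f, c)\<in>set ps. f \<in> ldual lact UNIV) \<and>
        (\<forall>x\<in>F. x = (\<Sum>(f, c)\<leftarrow>ps. lact (f x) c))))"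

definition lsubmodule :: "('r::ring_1 \<Rightarrow> 'c::ab_group_add \<Rightarrow> 'c) \<Rightarrow> 'c set \<Rightarrow> bool" where
  "lsubmodule lact M \<longleftrightarrow> 0 \<in> M \<and> (\<forall>x\<in>M. \<forall>y\<in>M. x + y \<in> M) \<and> (\<forall>x\<in>M. - x \<in> M) \<and>
     (\<forall>r. \<forall>x\<in>M. lact r x \<in> M)"

definition subcomodule :: "('r::ring_1 \<Rightarrow> 'c::ab_group_add \<Rightarrow> 'c) \<Rightarrow> ('c \<Rightarrow> 'r \<Rightarrow> 'c) \<Rightarrow>
    ('c \<Rightarrow> ('c \<times> 'c) list) \<Rightarrow> 'c set \<Rightarrow> bool" where
  "subcomodule lact ract Delta M \<longleftrightarrow> lsubmodule lact M \<and>
     (\<forall>m\<in>M. \<exists>ys. set ys \<subseteq> UNIV \<times> M \<and> teq2 lact ract ys (Delta m))"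

definition subcoact :: "('r::ring_1 \<Rightarrow> 'c::ab_group_add \<Rightarrow> 'c) \<Rightarrow> ('c \<Rightarrow> 'r \<Rightarrow> 'c) \<Rightarrow>
    ('c \<Rightarrow> ('c \<times> 'c) list) \<Rightarrow> 'c set \<Rightarrow> 'c \<Rightarrow> ('c \<times> 'c) list" where
  "subcoact lact ract Delta M m = (SOME ys. set ys \<subseteq> UNIV \<times> M \<and> teq2 lact ract ys (Delta m))"

definition comodule_decomp :: "('r::ring_1 \<Rightarrow> 'c::ab_group_add \<Rightarrow> 'c) \<Rightarrow> ('c \<Rightarrow> 'r \<Rightarrow> 'c) \<Rightarrow>
    ('c \<Rightarrow> ('c \<times> 'c) list) \<Rightarrow> ('i \<Rightarrow> 'c set) \<Rightarrow> bool" where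
  "comodule_decomp lact ract Delta Ci \<longleftrightarrow>
     (\<forall>i. subcomodule lact ract Delta (Ci i)) \<and>
     (\<forall>c. \<exists>!x. finite {i. x i \<noteq> 0} \<and> (\<forall>i. x i \<in> Ci i) \<and> c = sum x {i. x i \<noteq> 0})"

text \<open>Right {}^*C-action on {}^*M for a left comodule M with coaction rho:
  (h . f)(m) = f(m_[-1] h(m_[0])).\<close>
definition dact :: "('c::ab_group_add \<Rightarrow> 'r::ring_1 \<Rightarrow> 'c) \<Rightarrow> ('c \<Rightarrow> ('c \<times> 'c) list) \<Rightarrow>
    'c set \<Rightarrow> ('c \<Rightarrow> 'r) \<Rightarrow> ('c \<Rightarrow> 'r) \<Rightarrow> ('c \<Rightarrow> 'r)" where
  "dact ract rho M h f = (\<lambda>m. if m \<in> M then f (\<Sum>(a, b)\<leftarrow>rho m. ract a (h b)) else 0)"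

text \<open>Rat^C({}^*M): elements n with n . f = sum_k n_k f(c_k) for all f in {}^*C,
  where (n_k r)(m) = n_k(m) r is the right R-module structure of {}^*M.\<close>
definition ratdual :: "('r::ring_1 \<Rightarrow> 'c::ab_group_add \<Rightarrow> 'c) \<Rightarrow> ('c \<Rightarrow> 'r \<Rightarrow> 'c) \<Rightarrow>
    ('c \<Rightarrow> ('c \<times> 'c) list) \<Rightarrow> 'c set \<Rightarrow> ('c \<Rightarrow> 'r) set" where
  "ratdual lact ract rho M = {n \<in> ldual lact M. \<exists>ps :: (('c \<Rightarrow> 'r) \<times> 'c) list.
      (\<forall>(n', c)\<in>set ps. n' \<in> ldual lact M) \<and>
      (\<forall>f\<in>ldual lact UNIV. dact ract rho M n f = (\<lambda>m. \<Sum>(n', c)\<leftarrow>ps. n' m * f c))}"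

definition finite_dense :: "'c set \<Rightarrow> ('c \<Rightarrow> 'r) set \<Rightarrow> ('c \<Rightarrow> 'r) set \<Rightarrow> bool" where
  "finite_dense M S D \<longleftrightarrow>
     (\<forall>g\<in>S. \<forall>F. finite F \<and> F \<subseteq> M \<longrightarrow> (\<exists>d\<in>D. \<forall>x\<in>F. d x = g x))"

end

theory Submission
  imports Defs
begin

(*
  Write \<pi>_i : C \<rightarrow> C_i for the projections of the decomposition.  Left linear maps
  pull back along \<pi>_i (g \<mapsto> g \<circ> \<pi>_i) and restrict to C_i (d \<mapsto> d|C_i), and both
  operations preserve rationality:
    - because C_i is a subcomodule, the coaction of m \<in> C_i computed in C or in C_i
      gives the same element m_[-1] h(m_[0]), so restriction of a rational d is rational;
    - the action of a pulled-back functional h \<circ> \<pi>_i on m only sees the i-th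
      component \<pi>_i(m), so a pull-back of a rational functional is rational.
  Since rational functionals on C are closed under finite sums, a functional g on C is
  approximated on a finite set F by \<Sum>_{i\<in>J} d_i \<circ> \<pi>_i, where J collects the indices
  of the components of F and d_i approximates g|C_i; conversely a functional on C_i is
  approximated by restricting an approximation of its pull-back.
*)

section \<open>Evaluating formal sums of simple tensors\<close>

definition zmult :: "int \<Rightarrow> 'g::ab_group_add \<Rightarrow> 'g" where
  "zmult n g = sum_list (replicate (nat n) g) - sum_list (replicate (nat (- n)) g)"

text \<open>Any representation of \<open>n\<close> as a difference of naturals computes \<open>zmult n\<close>;
  this is what makes \<open>zmult\<close> additive in \<open>n\<close>.\<close>
lemma zmult_as_difference:
  assumes "n = int a - int b"
  shows "zmult n g = sum_list (replicate a g) - sum_list (replicate b g)"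
proof (cases "b \<le> a")
  case True
  then have "a = b + nat n" "nat (- n) = 0" using assms by auto
  then show ?thesis unfolding zmult_def by (simp add: replicate_add)
next
  case False
  then have "b = a + nat (- n)" "nat n = 0" using assms by auto
  then show ?thesis unfolding zmult_def by (simp add: replicate_add)
qed

lemma zmult_add: "zmult (m + n) g = zmult m g + zmult n g"
proof -
  have "zmult (m + n) g = sum_list (replicate (nat m + nat n) g)
                           - sum_list (replicate (nat (- m) + nat (- n)) g)"
    by (rule zmult_as_difference) auto
  then show ?thesis unfolding zmult_def by (simp add: replicate_add algebra_simps)
qed

lemma zmult_neg: "zmult (- n) g = - zmult n g"
  unfolding zmult_def by simp

lemma zmult_diff: "zmult (m - n) g = zmult m g - zmult n g"
  using zmult_add[of m "- n" g] by (simp add: zmult_neg)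

lemma zmult_0 [simp]: "zmult 0 g = 0"
  unfolding zmult_def by simp

lemma zmult_delta: "zmult (delta p q) g = (if q = p then g else 0)"
  unfolding delta_def zmult_def by simp

text \<open>The group homomorphism from finitely supported integer-valued functions on \<open>Q\<close>
  to \<open>G\<close> that extends \<open>\<phi> : Q \<rightarrow> G\<close>; it is meaningful for functions of finite support.\<close>
definition zeval :: "('q \<Rightarrow> 'g::ab_group_add) \<Rightarrow> ('q \<Rightarrow> int) \<Rightarrow> 'g" where
  "zeval \<phi> x = (\<Sum>q\<in>{q. x q \<noteq> 0}. zmult (x q) (\<phi> q))"

lemma zeval_on:
  assumes "finite S" "{q. x q \<noteq> 0} \<subseteq> S"
  shows "zeval \<phi> x = (\<Sum>q\<in>S. zmult (x q) (\<phi> q))"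
  unfolding zeval_def by (rule sum.mono_neutral_left) (use assms in auto)

lemma zeval_add:
  assumes "finite {q. x q \<noteq> 0}" "finite {q. y q \<noteq> 0}"
  shows "zeval \<phi> (\<lambda>q. x q + y q) = zeval \<phi> x + zeval \<phi> y"
proof -
  let ?S = "{q. x q \<noteq> 0} \<union> {q. y q \<noteq> 0}"
  have "finite ?S" using assms by blast
  then show ?thesis
    by (subst (1 2 3) zeval_on[where S = ?S]) (auto simp: zmult_add sum.distrib)
qed

lemma zeval_neg: "zeval \<phi> (\<lambda>q. - x q) = - zeval \<phi> x"
  unfolding zeval_def by (simp add: zmult_neg sum_negf)

lemma finite_support_delta: "finite {q. delta p q \<noteq> 0}"
  by (rule finite_subset[of _ "{p}"]) (auto simp: delta_def)

lemma finite_support_add: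
  "finite {q. x q \<noteq> 0} \<Longrightarrow> finite {q. y q \<noteq> 0} \<Longrightarrow> finite {q. x q + y q \<noteq> (0::'g::ab_group_add)}"
  by (rule finite_subset[of _ "{q. x q \<noteq> 0} \<union> {q. y q \<noteq> 0}"]) auto

lemma finite_support_diff:
  "finite {q. x q \<noteq> 0} \<Longrightarrow> finite {q. y q \<noteq> 0} \<Longrightarrow> finite {q. x q - y q \<noteq> (0::'g::ab_group_add)}"
  by (rule finite_subset[of _ "{q. x q \<noteq> 0} \<union> {q. y q \<noteq> 0}"]) auto

lemma zeval_delta3:
  "zeval \<phi> (\<lambda>q. delta p1 q - delta p2 q - delta p3 q) = \<phi> p1 - \<phi> p2 - \<phi> p3"
proof -
  have "{q. delta p1 q - delta p2 q - delta p3 q \<noteq> 0} \<subseteq> {p1, p2, p3}"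
    by (auto simp: delta_def)
  then show ?thesis
    by (simp add: zeval_on[where S = "{p1, p2, p3}"] zmult_diff zmult_delta sum_subtractf)
qed

lemma zeval_delta2: "zeval \<phi> (\<lambda>q. delta p1 q - delta p2 q) = \<phi> p1 - \<phi> p2"
proof -
  have "{q. delta p1 q - delta p2 q \<noteq> 0} \<subseteq> {p1, p2}"
    by (auto simp: delta_def)
  then show ?thesis
    by (simp add: zeval_on[where S = "{p1, p2}"] zmult_diff zmult_delta sum_subtractf)
qed

lemma tensor2_rel_zeval:
  fixes \<phi> :: "'c::ab_group_add \<times> 'c \<Rightarrow> 'g::ab_group_add"
  assumes add_left: "\<And>a a' b. \<phi> (a + a', b) = \<phi> (a, b) + \<phi> (a', b)"
    and add_right: "\<And>a b b'. \<phi> (a, b + b') = \<phi> (a, b) + \<phi> (a, b')"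
    and balanced: "\<And>a r b. \<phi> (ract a r, b) = \<phi> (a, lact r b)"
    and "x \<in> tensor2_rel lact ract"
  shows "finite {q. x q \<noteq> 0} \<and> zeval \<phi> x = 0"
  using \<open>x \<in> tensor2_rel lact ract\<close>
proof induct
  case zero
  show ?case by (simp add: zeval_def)
next
  case addl
  show ?case
    by (intro conjI finite_support_diff finite_support_delta) (simp add: zeval_delta3 add_left)
next
  case addr
  show ?case
    by (intro conjI finite_support_diff finite_support_delta) (simp add: zeval_delta3 add_right)
next
  case bal
  show ?case
    by (intro conjI finite_support_diff finite_support_delta) (simp add: zeval_delta2 balanced)
next
  case (plus x y)
  then have "finite {q. x q \<noteq> 0}" "finite {q. y q \<noteq> 0}" by blast+
  with plus show ?case by (simp add: zeval_add finite_support_add)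
next
  case neg
  then show ?case by (simp add: zeval_neg)
qed

lemma zeval_fcount_on:
  assumes "finite S" "set xs \<subseteq> S"
  shows "(\<Sum>q\<in>S. zmult (fcount xs q) (\<phi> q)) = sum_list (map \<phi> xs)"
  using assms(2)
proof (induct xs)
  case Nil
  then show ?case by (simp add: fcount_def)
next
  case (Cons a xs)
  have "fcount (a # xs) q = delta a q + fcount xs q" for q
    unfolding fcount_def delta_def by auto
  with Cons assms(1) show ?case by (simp add: zmult_add zmult_delta sum.distrib)
qed

lemma fcount_support: "{q. fcount xs q \<noteq> 0} \<subseteq> set xs"
  unfolding fcount_def by (auto simp: filter_empty_conv)

lemma teq2_sum_eq:
  fixes \<phi> :: "'c::ab_group_add \<times> 'c \<Rightarrow> 'g::ab_group_add"
  assumes "\<And>a a' b. \<phi> (a + a', b) = \<phi> (a, b) + \<phi> (a', b)"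
    and "\<And>a b b'. \<phi> (a, b + b') = \<phi> (a, b) + \<phi> (a, b')"
    and "\<And>a r b. \<phi> (ract a r, b) = \<phi> (a, lact r b)"
    and "teq2 lact ract xs ys"
  shows "sum_list (map \<phi> xs) = sum_list (map \<phi> ys)"
proof -
  let ?x = "\<lambda>q. fcount xs q - fcount ys q"
  let ?S = "set xs \<union> set ys"
  have "zeval \<phi> ?x = 0"
    using tensor2_rel_zeval[where lact = lact and ract = ract, OF assms(1-3)] assms(4) unfolding teq2_def by blast
  moreover have "{q. ?x q \<noteq> 0} \<subseteq> ?S"
    using fcount_support[of xs] fcount_support[of ys] by fastforce
  then have "zeval \<phi> ?x = sum_list (map \<phi> xs) - sum_list (map \<phi> ys)"
    by (simp add: zeval_on[where S = ?S] zmult_diff sum_subtractf zeval_fcount_on)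
  ultimately show ?thesis by simp
qed

section \<open>Left duals\<close>

lemma ldual_UNIV_iff:
  "h \<in> ldual lact UNIV \<longleftrightarrow> (\<forall>x y. h (x + y) = h x + h y) \<and> (\<forall>r x. h (lact r x) = r * h x)"
  unfolding ldual_def by auto

lemma ldual_add: "h \<in> ldual lact UNIV \<Longrightarrow> h (x + y) = h x + h y"
  unfolding ldual_UNIV_iff by blast

lemma ldual_lact: "h \<in> ldual lact UNIV \<Longrightarrow> h (lact r x) = r * h x"
  unfolding ldual_UNIV_iff by blast

lemma ldual_zero: "h \<in> ldual lact UNIV \<Longrightarrow> h 0 = 0"
  using ldual_add[of h lact 0 0] by simp

lemma ldual_sum: "h \<in> ldual lact UNIV \<Longrightarrow> h (sum g A) = (\<Sum>i\<in>A. h (g i))"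
  using sum_comp_morphism[of h g A] by (simp add: ldual_zero ldual_add o_def)

lemma ldual_UNIV_0: "(\<lambda>_. 0) \<in> ldual lact UNIV"
  unfolding ldual_UNIV_iff by simp

lemma ldual_UNIV_plus:
  "g \<in> ldual lact UNIV \<Longrightarrow> h \<in> ldual lact UNIV \<Longrightarrow> (\<lambda>c. g c + h c) \<in> ldual lact UNIV"
  unfolding ldual_UNIV_iff by (simp add: algebra_simps)

lemma ldual_on_add: "h \<in> ldual lact M \<Longrightarrow> x \<in> M \<Longrightarrow> y \<in> M \<Longrightarrow> h (x + y) = h x + h y"
  unfolding ldual_def by blast

lemma ldual_on_lact: "h \<in> ldual lact M \<Longrightarrow> x \<in> M \<Longrightarrow> h (lact r x) = r * h x"
  unfolding ldual_def by blast

lemma ldual_on_zero: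
  assumes "lsubmodule lact M" "h \<in> ldual lact M"
  shows "h 0 = 0"
proof -
  have "0 \<in> M" using assms(1) unfolding lsubmodule_def by (rule conjunct1)
  then show ?thesis using ldual_on_add[OF assms(2), of 0 0] by simp
qed

definition restr :: "'c set \<Rightarrow> ('c \<Rightarrow> 'r) \<Rightarrow> 'c \<Rightarrow> 'r::zero" where
  "restr M h = (\<lambda>m. if m \<in> M then h m else 0)"

lemma restr_ldual:
  "lsubmodule lact M \<Longrightarrow> h \<in> ldual lact UNIV \<Longrightarrow> restr M h \<in> ldual lact M"
  unfolding ldual_def lsubmodule_def restr_def by auto

lemma finite_denseD:
  "finite_dense M S D \<Longrightarrow> g \<in> S \<Longrightarrow> finite F \<Longrightarrow> F \<subseteq> M \<Longrightarrow> \<exists>d\<in>D. \<forall>x\<in>F. d x = g x"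
  unfolding finite_dense_def by blast

section \<open>The action of functionals on a comodule\<close>

text \<open>\<open>hit ract \<rho> h m = m\<^sub>[\<^sub>-\<^sub>1\<^sub>] h(m\<^sub>[\<^sub>0\<^sub>])\<close> for a coaction \<rho> given by formal sums;
  the right action on the dual is \<open>(h \<cdot> f)(m) = f (hit ract \<rho> h m)\<close>.\<close>
definition hit :: "('c \<Rightarrow> 'r \<Rightarrow> 'c::ab_group_add) \<Rightarrow> ('c \<Rightarrow> ('c \<times> 'c) list) \<Rightarrow> ('c \<Rightarrow> 'r) \<Rightarrow> 'c \<Rightarrow> 'c" where
  "hit ract \<rho> h m = (\<Sum>(a, b)\<leftarrow>\<rho> m. ract a (h b))"

lemma dact_hit: "dact ract \<rho> M h f = (\<lambda>m. if m \<in> M then f (hit ract \<rho> h m) else 0)"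
  unfolding dact_def hit_def ..

text \<open>Rationality in terms of \<open>hit\<close>: the defining identity only has to be checked on
  \<open>M\<close>, because off \<open>M\<close> both sides vanish.\<close>
lemma ratdual_iff:
  fixes lact :: "'r::ring_1 \<Rightarrow> 'c::ab_group_add \<Rightarrow> 'c"
  shows "d \<in> ratdual lact ract \<rho> M \<longleftrightarrow> d \<in> ldual lact M \<and>
     (\<exists>ps. (\<forall>(n, c)\<in>set ps. n \<in> ldual lact M) \<and>
       (\<forall>f\<in>ldual lact UNIV. \<forall>m\<in>M. f (hit ract \<rho> d m) = (\<Sum>(n, c)\<leftarrow>ps. n m * f c)))"
proof -
  have "ldual lact M \<subseteq> {n. \<forall>m. m \<notin> M \<longrightarrow> n m = 0}" unfolding ldual_def by blast
  then have vanish: "\<forall>(n, c)\<in>set ps. n \<in> ldual lact M \<Longrightarrow> m \<notin> M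
      \<Longrightarrow> (\<Sum>(n, c)\<leftarrow>ps. n m * f c) = 0" for ps :: "(('c \<Rightarrow> 'r) \<times> 'c) list" and m f
    by (induct ps) auto
  show ?thesis
    unfolding ratdual_def dact_hit mem_Collect_eq fun_eq_iff
    by (rule conj_cong[OF refl], rule ex_cong1) (use vanish in \<open>auto split: if_splits\<close>)
qed

section \<open>A coring decomposed into subcomodules\<close>

locale coring_decomposition =
  fixes lact :: "'r::ring_1 \<Rightarrow> 'c::ab_group_add \<Rightarrow> 'c" and ract :: "'c \<Rightarrow> 'r \<Rightarrow> 'c"
    and Delta :: "'c \<Rightarrow> ('c \<times> 'c) list" and Ci :: "'i \<Rightarrow> 'c set"
  assumes bimodule: "bimodule lact ract"
    and Delta_add: "\<And>x y. teq2 lact ract (Delta (x + y)) (Delta x @ Delta y)"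
    and decomposition: "comodule_decomp lact ract Delta Ci"
begin

lemma lact_add: "lact r (x + y) = lact r x + lact r y"
  using bimodule by (simp add: bimodule_def)

lemma lact_zero [simp]: "lact r 0 = 0"
  using lact_add[of r 0 0] by simp

lemma ract_add_left: "ract (x + y) r = ract x r + ract y r"
  using bimodule by (simp add: bimodule_def)

lemma ract_add_right: "ract x (r + s) = ract x r + ract x s"
  using bimodule by (simp add: bimodule_def)

lemma ract_zero [simp]: "ract x 0 = 0"
  using ract_add_right[of x 0 0] by simp

lemma ract_mult: "ract x (r * s) = ract (ract x r) s"
  using bimodule by (simp add: bimodule_def)

lemma lact_sum: "lact r (sum g A) = (\<Sum>i\<in>A. lact r (g i))"
  using sum_comp_morphism[of "lact r" g A] lact_add by (simp add: o_def)

lemma subcomodule: "subcomodule lact ract Delta (Ci i)"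
  using decomposition unfolding comodule_decomp_def by (elim conjE) (rule spec)

lemma lsubmodule: "lsubmodule lact (Ci i)"
  using subcomodule unfolding subcomodule_def by (rule conjunct1)

lemma Ci_zero: "0 \<in> Ci i"
  using lsubmodule[of i] by (simp add: lsubmodule_def)

lemma Ci_add: "x \<in> Ci i \<Longrightarrow> y \<in> Ci i \<Longrightarrow> x + y \<in> Ci i"
  using lsubmodule[of i] by (simp add: lsubmodule_def)

lemma Ci_lact: "x \<in> Ci i \<Longrightarrow> lact r x \<in> Ci i"
  using lsubmodule[of i] by (simp add: lsubmodule_def)

definition components :: "'c \<Rightarrow> 'i \<Rightarrow> 'c" where
  "components c = (THE x. finite {i. x i \<noteq> 0} \<and> (\<forall>i. x i \<in> Ci i) \<and> c = sum x {i. x i \<noteq> 0})"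

lemma components_ex1: "\<exists>!x. finite {i. x i \<noteq> 0} \<and> (\<forall>i. x i \<in> Ci i) \<and> c = sum x {i. x i \<noteq> 0}"
  using decomposition unfolding comodule_decomp_def by (elim conjE) (rule spec)

lemma components_spec:
  "finite {i. components c i \<noteq> 0} \<and> (\<forall>i. components c i \<in> Ci i)
   \<and> c = sum (components c) {i. components c i \<noteq> 0}"
  unfolding components_def by (rule theI'[OF components_ex1])

lemma components_finite: "finite {i. components c i \<noteq> 0}"
  and components_mem: "components c i \<in> Ci i"
  using components_spec by blast+

lemma components_unique:
  assumes "finite {i. x i \<noteq> 0}" "\<forall>i. x i \<in> Ci i" "c = sum x {i. x i \<noteq> 0}"
  shows "components c = x"
  unfolding components_def by (rule the1_equality[OF components_ex1]) (intro conjI assms)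

lemma components_sum:
  assumes "finite J" "{i. components c i \<noteq> 0} \<subseteq> J"
  shows "sum (components c) J = c"
proof -
  have "sum (components c) J = sum (components c) {i. components c i \<noteq> 0}"
    by (rule sum.mono_neutral_right) (use assms in auto)
  then show ?thesis using components_spec by simp
qed

lemma components_of_sum:
  assumes "finite J" "{i. x i \<noteq> 0} \<subseteq> J" "\<forall>i. x i \<in> Ci i"
  shows "components (sum x J) = x"
proof (rule components_unique)
  show "finite {i. x i \<noteq> 0}" using assms finite_subset by blast
  show "sum x J = sum x {i. x i \<noteq> 0}"
    by (rule sum.mono_neutral_right) (use assms in auto)
qed (use assms in blast)

lemma components_add: "components (c + c') = (\<lambda>i. components c i + components c' i)"
proof -
  let ?J = "{i. components c i \<noteq> 0} \<union> {i. components c' i \<noteq> 0}"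
  have J: "finite ?J" using components_finite by blast
  have "sum (components c) ?J = c" "sum (components c') ?J = c'"
    by (rule components_sum[OF J], blast)+
  then have "c + c' = sum (\<lambda>i. components c i + components c' i) ?J"
    by (simp add: sum.distrib)
  also have "components \<dots> = (\<lambda>i. components c i + components c' i)"
    by (rule components_of_sum[OF J]) (auto intro: Ci_add components_mem)
  finally show ?thesis .
qed

lemma components_lact: "components (lact r c) = (\<lambda>i. lact r (components c i))"
proof -
  let ?J = "{i. components c i \<noteq> 0}"
  have J: "finite ?J" using components_finite by blast
  have "lact r c = lact r (sum (components c) ?J)"
    by (rule arg_cong[where f = "lact r", OF components_sum[OF J order_refl, symmetric]])
  also have "\<dots> = sum (\<lambda>i. lact r (components c i)) ?J"
    by (rule lact_sum)
  also have "components \<dots> = (\<lambda>i. lact r (components c i))"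
    by (rule components_of_sum[OF J]) (auto intro: Ci_lact components_mem)
  finally show ?thesis .
qed

lemma components_of_mem:
  assumes "m \<in> Ci i"
  shows "components m = (\<lambda>j. if j = i then m else 0)"
proof -
  let ?x = "\<lambda>j. if j = i then m else 0"
  have "components (sum ?x {i}) = ?x"
  proof (rule components_of_sum)
    show "{j. ?x j \<noteq> 0} \<subseteq> {i}" by auto
    show "\<forall>j. ?x j \<in> Ci j" using assms Ci_zero by simp
  qed simp
  then show ?thesis by simp
qed

definition pullback :: "'i \<Rightarrow> ('c \<Rightarrow> 'r) \<Rightarrow> 'c \<Rightarrow> 'r" where
  "pullback i h = (\<lambda>c. h (components c i))"

lemma pullback_ldual: "h \<in> ldual lact (Ci i) \<Longrightarrow> pullback i h \<in> ldual lact UNIV"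
  unfolding ldual_UNIV_iff pullback_def
  by (simp add: components_add components_lact components_mem ldual_on_add ldual_on_lact)

lemma pullback_on_Ci: "m \<in> Ci i \<Longrightarrow> pullback i h m = h m"
  unfolding pullback_def by (simp add: components_of_mem)

lemma hit_teq2:
  assumes "h \<in> ldual lact UNIV" "teq2 lact ract xs ys"
  shows "(\<Sum>(a, b)\<leftarrow>xs. ract a (h b)) = (\<Sum>(a, b)\<leftarrow>ys. ract a (h b))"
  by (rule teq2_sum_eq[OF _ _ _ assms(2)])
     (auto simp: ract_add_left ract_add_right ract_mult ldual_add[OF assms(1)] ldual_lact[OF assms(1)])

text \<open>Since \<open>\<Delta>\<close> is additive, the action of a linear functional is additive in \<open>c\<close>.\<close>
lemma hit_add: "h \<in> ldual lact UNIV \<Longrightarrow> hit ract Delta h (x + y) = hit ract Delta h x + hit ract Delta h y"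
  unfolding hit_def using hit_teq2[OF _ Delta_add[of x y]] by simp

lemma hit_sum: "h \<in> ldual lact UNIV \<Longrightarrow> hit ract Delta h (sum g A) = (\<Sum>j\<in>A. hit ract Delta h (g j))"
  using sum_comp_morphism[of "hit ract Delta h" g A] hit_add[of h 0 0] hit_add
  by (simp add: o_def)

lemma hit_plus: "hit ract \<rho> (\<lambda>b. g b + h b) m = hit ract \<rho> g m + hit ract \<rho> h m"
  unfolding hit_def by (simp add: ract_add_right split_def sum_list_addf)

lemma hit_zero: "hit ract \<rho> (\<lambda>_. 0) m = 0"
  unfolding hit_def by (simp add: split_def)

abbreviation coact :: "'i \<Rightarrow> 'c \<Rightarrow> ('c \<times> 'c) list" where
  "coact i \<equiv> subcoact lact ract Delta (Ci i)"

lemma coact_spec: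
  assumes "m \<in> Ci i"
  shows "set (coact i m) \<subseteq> UNIV \<times> Ci i \<and> teq2 lact ract (coact i m) (Delta m)"
  unfolding subcoact_def
  by (rule someI_ex) (use subcomodule[of i] assms in \<open>auto simp: subcomodule_def\<close>)

lemma hit_coact: "h \<in> ldual lact UNIV \<Longrightarrow> m \<in> Ci i \<Longrightarrow> hit ract Delta h m = hit ract (coact i) h m"
  unfolding hit_def using hit_teq2[OF _ coact_spec[THEN conjunct2]] by simp

lemma hit_coact_cong:
  assumes "m \<in> Ci i" "\<And>b. b \<in> Ci i \<Longrightarrow> h b = h' b"
  shows "hit ract (coact i) h m = hit ract (coact i) h' m"
  unfolding hit_def
  by (rule arg_cong[where f = sum_list, OF map_cong[OF refl]])
     (use coact_spec[OF assms(1)] assms(2) in auto)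

text \<open>The action of a pulled-back functional on an element of \<open>C\<^sub>j\<close> vanishes for
  \<open>j \<noteq> i\<close>, since the coaction keeps the second tensor factor inside \<open>C\<^sub>j\<close>.\<close>
lemma hit_pullback_summand:
  assumes h: "h \<in> ldual lact (Ci i)" and x: "x \<in> Ci j"
  shows "hit ract Delta (pullback i h) x = (if j = i then hit ract (coact i) h x else 0)"
proof -
  have "hit ract Delta (pullback i h) x = hit ract (coact j) (pullback i h) x"
    by (rule hit_coact[OF pullback_ldual[OF h] x])
  also have "\<dots> = hit ract (coact j) (if j = i then h else (\<lambda>_. 0)) x"
    by (rule hit_coact_cong[OF x])
       (use ldual_on_zero[OF lsubmodule h] in \<open>auto simp: pullback_def components_of_mem\<close>)
  finally show ?thesis by (simp add: hit_zero)
qed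

lemma hit_pullback:
  assumes h: "h \<in> ldual lact (Ci i)"
  shows "hit ract Delta (pullback i h) m = hit ract (coact i) h (components m i)"
proof -
  let ?J = "insert i {j. components m j \<noteq> 0}"
  have J: "finite ?J" using components_finite by blast
  have "sum (components m) ?J = m" by (rule components_sum[OF J]) auto
  then have "hit ract Delta (pullback i h) m = hit ract Delta (pullback i h) (sum (components m) ?J)"
    by simp
  also have "\<dots> = (\<Sum>j\<in>?J. if j = i then hit ract (coact i) h (components m j) else 0)"
    by (simp add: hit_sum[OF pullback_ldual[OF h]] hit_pullback_summand[OF h components_mem])
  also have "\<dots> = hit ract (coact i) h (components m i)"
    using J by simp
  finally show ?thesis .
qed

lemma ratdual_restr:
  assumes "d \<in> ratdual lact ract Delta UNIV"
  shows "restr (Ci i) d \<in> ratdual lact ract (coact i) (Ci i)"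
proof -
  obtain ps where d: "d \<in> ldual lact UNIV" and ps: "\<forall>(n, c)\<in>set ps. n \<in> ldual lact UNIV"
    and act: "\<And>f m. f \<in> ldual lact UNIV \<Longrightarrow> f (hit ract Delta d m) = (\<Sum>(n, c)\<leftarrow>ps. n m * f c)"
    using assms unfolding ratdual_iff by blast
  let ?ps = "map (\<lambda>(n, c). (restr (Ci i) n, c)) ps"
  have "f (hit ract (coact i) (restr (Ci i) d) m) = (\<Sum>(n, c)\<leftarrow>?ps. n m * f c)"
    if f: "f \<in> ldual lact UNIV" and m: "m \<in> Ci i" for f m
  proof -
    have "hit ract (coact i) (restr (Ci i) d) m = hit ract Delta d m"
      using hit_coact_cong[OF m, of "restr (Ci i) d" d] hit_coact[OF d m] by (simp add: restr_def)
    then show ?thesis using act[OF f, of m] m by (simp add: restr_def split_def o_def)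
  qed
  moreover have "\<forall>(n, c)\<in>set ?ps. n \<in> ldual lact (Ci i)"
    using ps restr_ldual[OF lsubmodule] by auto
  ultimately show ?thesis
    unfolding ratdual_iff using restr_ldual[OF lsubmodule d] by blast
qed

lemma ratdual_pullback:
  assumes "D \<in> ratdual lact ract (coact i) (Ci i)"
  shows "pullback i D \<in> ratdual lact ract Delta UNIV"
proof -
  obtain ps where D: "D \<in> ldual lact (Ci i)" and ps: "\<forall>(n, c)\<in>set ps. n \<in> ldual lact (Ci i)"
    and act: "\<And>f m. f \<in> ldual lact UNIV \<Longrightarrow> m \<in> Ci i
                \<Longrightarrow> f (hit ract (coact i) D m) = (\<Sum>(n, c)\<leftarrow>ps. n m * f c)"
    using assms unfolding ratdual_iff by blast
  let ?ps = "map (\<lambda>(n, c). (pullback i n, c)) ps"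
  have "f (hit ract Delta (pullback i D) m) = (\<Sum>(n, c)\<leftarrow>?ps. n m * f c)"
    if "f \<in> ldual lact UNIV" for f m
    using act[OF that components_mem[of m i]] unfolding hit_pullback[OF D]
    by (simp add: pullback_def split_def o_def)
  moreover have "\<forall>(n, c)\<in>set ?ps. n \<in> ldual lact UNIV"
    using ps pullback_ldual by auto
  ultimately show ?thesis
    unfolding ratdual_iff using pullback_ldual[OF D] by blast
qed

lemma ratdual_0: "(\<lambda>_. 0) \<in> ratdual lact ract Delta UNIV"
  unfolding ratdual_iff
  by (intro conjI ldual_UNIV_0 exI[of _ "[]"]) (simp_all add: hit_zero ldual_zero)

lemma ratdual_plus:
  assumes "d \<in> ratdual lact ract Delta UNIV" "d' \<in> ratdual lact ract Delta UNIV"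
  shows "(\<lambda>c. d c + d' c) \<in> ratdual lact ract Delta UNIV"
proof -
  obtain ps where d: "d \<in> ldual lact UNIV" and ps: "\<forall>(n, c)\<in>set ps. n \<in> ldual lact UNIV"
    and act: "\<And>f m. f \<in> ldual lact UNIV \<Longrightarrow> f (hit ract Delta d m) = (\<Sum>(n, c)\<leftarrow>ps. n m * f c)"
    using assms(1) unfolding ratdual_iff by blast
  obtain ps' where d': "d' \<in> ldual lact UNIV" and ps': "\<forall>(n, c)\<in>set ps'. n \<in> ldual lact UNIV"
    and act': "\<And>f m. f \<in> ldual lact UNIV \<Longrightarrow> f (hit ract Delta d' m) = (\<Sum>(n, c)\<leftarrow>ps'. n m * f c)"
    using assms(2) unfolding ratdual_iff by blast
  have "f (hit ract Delta (\<lambda>c. d c + d' c) m) = (\<Sum>(n, c)\<leftarrow>ps @ ps'. n m * f c)"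
    if "f \<in> ldual lact UNIV" for f m
    using act[OF that, of m] act'[OF that, of m] by (simp add: hit_plus ldual_add[OF that])
  then show ?thesis
    unfolding ratdual_iff using ldual_UNIV_plus[OF d d'] ps ps' by (intro conjI exI[of _ "ps @ ps'"]) auto
qed

lemma ratdual_sum:
  "finite J \<Longrightarrow> (\<forall>i\<in>J. d i \<in> ratdual lact ract Delta UNIV)
   \<Longrightarrow> (\<lambda>c. \<Sum>i\<in>J. d i c) \<in> ratdual lact ract Delta UNIV"
proof (induct J rule: finite_induct)
  case empty
  then show ?case using ratdual_0 by simp
next
  case (insert j J)
  then show ?case using ratdual_plus[of "d j" "\<lambda>c. \<Sum>i\<in>J. d i c"] by simp
qed

text \<open>If every \<open>Rat(\<^sup>*C\<^sub>i)\<close> is dense, then so is \<open>Rat(\<^sup>*C)\<close>: approximate \<open>g\<close> on the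
  finitely many relevant components and add up the pull-backs.\<close>
lemma dense_from_summands:
  assumes dense: "\<And>i. finite_dense (Ci i) (ldual lact (Ci i)) (ratdual lact ract (coact i) (Ci i))"
  shows "finite_dense UNIV (ldual lact UNIV) (ratdual lact ract Delta UNIV)"
  unfolding finite_dense_def
proof (intro ballI allI impI)
  fix g and F :: "'c set"
  assume g: "g \<in> ldual lact UNIV" and F: "finite F \<and> F \<subseteq> UNIV"
  have "\<forall>i. \<exists>D. D \<in> ratdual lact ract (coact i) (Ci i)
      \<and> (\<forall>y\<in>(\<lambda>x. components x i) ` F. D y = restr (Ci i) g y)"
  proof
    fix i
    have "finite ((\<lambda>x. components x i) ` F)" "(\<lambda>x. components x i) ` F \<subseteq> Ci i"
      using F components_mem by auto
    from finite_denseD[OF dense restr_ldual[OF lsubmodule g] this]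
    show "\<exists>D. D \<in> ratdual lact ract (coact i) (Ci i)
        \<and> (\<forall>y\<in>(\<lambda>x. components x i) ` F. D y = restr (Ci i) g y)"
      unfolding Bex_def .
  qed
  then obtain D where D_spec: "\<forall>i. D i \<in> ratdual lact ract (coact i) (Ci i)
      \<and> (\<forall>y\<in>(\<lambda>x. components x i) ` F. D i y = restr (Ci i) g y)"
    by (rule choice[THEN exE])
  then have D: "\<And>i. D i \<in> ratdual lact ract (coact i) (Ci i)" by blast
  have agree: "D i (components x i) = g (components x i)" if "x \<in> F" for i x
    using D_spec that by (simp add: restr_def components_mem)
  let ?J = "\<Union>x\<in>F. {i. components x i \<noteq> 0}"
  have J: "finite ?J" using F by (simp add: components_finite)
  have rational: "(\<lambda>c. \<Sum>i\<in>?J. pullback i (D i) c) \<in> ratdual lact ract Delta UNIV"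
    by (rule ratdual_sum[OF J]) (simp add: ratdual_pullback[OF D])
  have approximates: "(\<Sum>i\<in>?J. pullback i (D i) x) = g x" if x: "x \<in> F" for x
  proof -
    have "(\<Sum>i\<in>?J. pullback i (D i) x) = (\<Sum>i\<in>?J. g (components x i))"
      using agree[OF x] by (simp add: pullback_def)
    also have "\<dots> = g (sum (components x) ?J)" by (rule ldual_sum[OF g, symmetric])
    also have "sum (components x) ?J = x" by (rule components_sum[OF J]) (use x in blast)
    finally show ?thesis .
  qed
  show "\<exists>d\<in>ratdual lact ract Delta UNIV. \<forall>x\<in>F. d x = g x"
    by (rule bexI[OF _ rational]) (simp add: approximates)
qed

text \<open>If \<open>Rat(\<^sup>*C)\<close> is dense, then so is each \<open>Rat(\<^sup>*C\<^sub>i)\<close>: restrict an approximation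
  of the pull-back.\<close>
lemma dense_on_summand:
  assumes dense: "finite_dense UNIV (ldual lact UNIV) (ratdual lact ract Delta UNIV)"
  shows "finite_dense (Ci i) (ldual lact (Ci i)) (ratdual lact ract (coact i) (Ci i))"
  unfolding finite_dense_def
proof (intro ballI allI impI)
  fix g F assume g: "g \<in> ldual lact (Ci i)" and F: "finite F \<and> F \<subseteq> Ci i"
  obtain d where d: "d \<in> ratdual lact ract Delta UNIV" and agree: "\<forall>x\<in>F. d x = pullback i g x"
    using finite_denseD[OF dense pullback_ldual[OF g]] F by blast
  have "\<forall>x\<in>F. restr (Ci i) d x = g x"
    using agree F by (auto simp: restr_def pullback_on_Ci)
  then show "\<exists>d\<in>ratdual lact ract (coact i) (Ci i). \<forall>x\<in>F. d x = g x"
    using ratdual_restr[OF d] by blast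
qed

end

theorem proposition2p4:
  fixes lact :: "'r::ring_1 \<Rightarrow> 'c::ab_group_add \<Rightarrow> 'c"
    and ract :: "'c \<Rightarrow> 'r \<Rightarrow> 'c"
    and Delta :: "'c \<Rightarrow> ('c \<times> 'c) list"
    and eps :: "'c \<Rightarrow> 'r"
    and Ci :: "'i \<Rightarrow> 'c set"
  assumes "coring lact ract Delta eps"
    and "left_alpha lact"
    and "comodule_decomp lact ract Delta Ci"
  shows "(\<forall>i. finite_dense (Ci i) (ldual lact (Ci i))
                 (ratdual lact ract (subcoact lact ract Delta (Ci i)) (Ci i)))
         \<longleftrightarrow> finite_dense UNIV (ldual lact UNIV) (ratdual lact ract Delta UNIV)"
proof -
  from assms(1) have "bimodule lact ract"
    unfolding coring_def by (elim conjE)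
  moreover from assms(1) have "\<forall>x y. teq2 lact ract (Delta (x + y)) (Delta x @ Delta y)"
    unfolding coring_def by (elim conjE)
  ultimately interpret coring_decomposition lact ract Delta Ci
    using assms(3) by unfold_locales blast+
  show ?thesis using dense_from_summands dense_on_summand by blast
qed

end
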